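(* Let $N=(S,T,F,M_0,\ell)$ be a plain structural conflict net. If $N$ has a fully reachable pure $\mathsf M$, then there are $\sigma\in\mathrm{Act}^*$ and $a,b,c\in\mathrm{Act}$ with $a\ne c$ such that $\langle\sigma,\{\{a,c\}\}\rangle\notin\mathcal F(N)$, $\langle\sigma,\{\{b\}\}\rangle\notin\mathcal F(N)$ and $\langle\sigma,\{\{a,b\},\{b,c\}\}\rangle\in\mathcal F(N)$.
   Context: Fix visible actions $\mathrm{Act}$ and $\tau\notin\mathrm{Act}$. A Petri net has disjoint $S,T$, $F:(S\times T)\cup(T\times S)\to\mathbb N$, $M_0\in\mathbb N^S$, $\ell:T\to\mathrm{Act}\cup\{\tau\}$. ${}^\bullet x(y)=F(y,x)$, $x^\bullet(y)=F(x,y)$, extended additively; multiset $\le,\cap,\cup$ pointwise $\le$, min, max. For finite nonempty multiset $G$ of transitions, $M[G\rangle M'$ iff ${}^\bullet G\le M$ and $M'=M-{}^\bullet G+G^\bullet$; reachable markings as usual; $t\smile u$ iff $M[\{t\}+\{u\}\rangle$ for some reachable $M$. Structural conflict net: $t\smile u\Rightarrow{}^\bullet t\cap{}^\bullet u=\emptyset$. Plain: $\ell$ injective and never $\tau$. Fully reachable pure $\mathsf M$: $t,u,v\in T$ with ${}^\bullet t\cap{}^\bullet u\ne\emptyset$, ${}^\bullet u\cap{}^\bullet v\ne\emptyset$, ${}^\bullet t\cap{}^\bullet v=\emptyset$ and a reachable $M$ with ${}^\bullet t\cup{}^\bullet u\cup{}^\bullet v\le M$. $M\xrightarrow{\alpha}M'$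 iff $M[t\rangle M'$ with $\ell(t)=\alpha$; $\Rightarrow$ reflexive transitive closure of $\xrightarrow{\tau}$; $M\overset{a_1\cdots a_n}{\Longrightarrow}M'$ iff $M\Rightarrow\xrightarrow{a_1}\Rightarrow\cdots\xrightarrow{a_n}\Rightarrow M'$. For a step $A$ (finite nonempty multiset over $\mathrm{Act}$), $M\xrightarrow{A}$ iff $M[G\rangle$ for a finite multiset $G$ of transitions, none labelled $\tau$, with label multiset $A$. $\mathcal F(N)$, the set of step failure pairs, consists of all $\langle\sigma,X\rangle$ with $\sigma\in\mathrm{Act}^*$ and $X$ a finite set of steps such that some $M$ has $M_0\overset{\sigma}{\Longrightarrow}M$, $M\not\xrightarrow{\tau}$ and $M\not\xrightarrow{A}$ for all $A\in X$. *)

theory Defs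
  imports Main "HOL-Library.Multiset"
begin

text \<open>A Petri net with places of type 's, transitions of type 't and visible
actions of type 'a.  The flow relation is split into
  Fst :: 's => 't => nat  (F(s,t)) and Fts :: 't => 's => nat (F(t,s)).
Labels are 'a option, where None plays the role of the invisible action tau.\<close>

type_synonym 's marking = "'s \<Rightarrow> nat"

definition preT :: "('s \<Rightarrow> 't \<Rightarrow> nat) \<Rightarrow> 't \<Rightarrow> 's marking" where
  "preT Fst t = (\<lambda>s. Fst s t)"

definition preG :: "('s \<Rightarrow> 't \<Rightarrow> nat) \<Rightarrow> 't multiset \<Rightarrow> 's marking" where
  "preG Fst G = (\<lambda>s. \<Sum>t\<in>#G. Fst s t)"

definition postG :: "('t \<Rightarrow> 's \<Rightarrow> nat) \<Rightarrow> 't multiset \<Rightarrow> 's marking" where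
  "postG Fts G = (\<lambda>s. \<Sum>t\<in>#G. Fts t s)"

definition fires ::
  "('s \<Rightarrow> 't \<Rightarrow> nat) \<Rightarrow> ('t \<Rightarrow> 's \<Rightarrow> nat) \<Rightarrow> 's marking \<Rightarrow> 't multiset \<Rightarrow> 's marking \<Rightarrow> bool" where
  "fires Fst Fts M G M' \<longleftrightarrow> G \<noteq> {#} \<and> preG Fst G \<le> M \<and>
     M' = (\<lambda>s. M s - preG Fst G s + postG Fts G s)"

definition enabled ::
  "('s \<Rightarrow> 't \<Rightarrow> nat) \<Rightarrow> ('t \<Rightarrow> 's \<Rightarrow> nat) \<Rightarrow> 's marking \<Rightarrow> 't multiset \<Rightarrow> bool" where
  "enabled Fst Fts M G \<longleftrightarrow> (\<exists>M'. fires Fst Fts M G M')"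

inductive reachable ::
  "('s \<Rightarrow> 't \<Rightarrow> nat) \<Rightarrow> ('t \<Rightarrow> 's \<Rightarrow> nat) \<Rightarrow> 's marking \<Rightarrow> 's marking \<Rightarrow> bool"
  for Fst Fts M0 where
  init: "reachable Fst Fts M0 M0"
| step: "reachable Fst Fts M0 M \<Longrightarrow> fires Fst Fts M {#t#} M' \<Longrightarrow> reachable Fst Fts M0 M'"

definition concurrent ::
  "('s \<Rightarrow> 't \<Rightarrow> nat) \<Rightarrow> ('t \<Rightarrow> 's \<Rightarrow> nat) \<Rightarrow> 's marking \<Rightarrow> 't \<Rightarrow> 't \<Rightarrow> bool" where
  "concurrent Fst Fts M0 t u \<longleftrightarrow>
     (\<exists>M. reachable Fst Fts M0 M \<and> enabled Fst Fts M ({#t#} + {#u#}))"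

definition structural_conflict_net ::
  "('s \<Rightarrow> 't \<Rightarrow> nat) \<Rightarrow> ('t \<Rightarrow> 's \<Rightarrow> nat) \<Rightarrow> 's marking \<Rightarrow> bool" where
  "structural_conflict_net Fst Fts M0 \<longleftrightarrow>
     (\<forall>t u. concurrent Fst Fts M0 t u \<longrightarrow> inf (preT Fst t) (preT Fst u) = (\<lambda>_. 0))"

definition plain :: "('t \<Rightarrow> 'a option) \<Rightarrow> bool" where
  "plain lab \<longleftrightarrow> inj lab \<and> (\<forall>t. lab t \<noteq> None)"

definition fully_reachable_pure_M ::
  "('s \<Rightarrow> 't \<Rightarrow> nat) \<Rightarrow> ('t \<Rightarrow> 's \<Rightarrow> nat) \<Rightarrow> 's marking \<Rightarrow> bool" where
  "fully_reachable_pure_M Fst Fts M0 \<longleftrightarrow>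
     (\<exists>t u v. inf (preT Fst t) (preT Fst u) \<noteq> (\<lambda>_. 0)
            \<and> inf (preT Fst u) (preT Fst v) \<noteq> (\<lambda>_. 0)
            \<and> inf (preT Fst t) (preT Fst v) = (\<lambda>_. 0)
            \<and> (\<exists>M. reachable Fst Fts M0 M \<and>
                   sup (preT Fst t) (sup (preT Fst u) (preT Fst v)) \<le> M))"

definition lstep ::
  "('s \<Rightarrow> 't \<Rightarrow> nat) \<Rightarrow> ('t \<Rightarrow> 's \<Rightarrow> nat) \<Rightarrow> ('t \<Rightarrow> 'a option) \<Rightarrow>
   's marking \<Rightarrow> 'a option \<Rightarrow> 's marking \<Rightarrow> bool" where
  "lstep Fst Fts lab M \<alpha> M' \<longleftrightarrow> (\<exists>t. fires Fst Fts M {#t#} M' \<and> lab t = \<alpha>)"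

fun weak_trace ::
  "('s \<Rightarrow> 't \<Rightarrow> nat) \<Rightarrow> ('t \<Rightarrow> 's \<Rightarrow> nat) \<Rightarrow> ('t \<Rightarrow> 'a option) \<Rightarrow>
   's marking \<Rightarrow> 'a list \<Rightarrow> 's marking \<Rightarrow> bool" where
  "weak_trace Fst Fts lab M [] M' \<longleftrightarrow>
     (\<lambda>X Y. lstep Fst Fts lab X None Y)\<^sup>*\<^sup>* M M'"
| "weak_trace Fst Fts lab M (a # \<sigma>) M' \<longleftrightarrow>
     (\<exists>M1 M2. (\<lambda>X Y. lstep Fst Fts lab X None Y)\<^sup>*\<^sup>* M M1 \<and>
              lstep Fst Fts lab M1 (Some a) M2 \<and> weak_trace Fst Fts lab M2 \<sigma> M')"

definition step_enabled ::
  "('s \<Rightarrow> 't \<Rightarrow> nat) \<Rightarrow> ('t \<Rightarrow> 's \<Rightarrow> nat) \<Rightarrow> ('t \<Rightarrow> 'a option) \<Rightarrow>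
   's marking \<Rightarrow> 'a multiset \<Rightarrow> bool" where
  "step_enabled Fst Fts lab M A \<longleftrightarrow>
     (\<exists>G. enabled Fst Fts M G \<and> (\<forall>t\<in>#G. lab t \<noteq> None) \<and>
          image_mset lab G = image_mset Some A)"

definition step_failures ::
  "('s \<Rightarrow> 't \<Rightarrow> nat) \<Rightarrow> ('t \<Rightarrow> 's \<Rightarrow> nat) \<Rightarrow> 's marking \<Rightarrow> ('t \<Rightarrow> 'a option) \<Rightarrow>
   ('a list \<times> 'a multiset set) set" where
  "step_failures Fst Fts M0 lab =
     {(\<sigma>, X). finite X \<and> (\<forall>A\<in>X. A \<noteq> {#}) \<and>
        (\<exists>M. weak_trace Fst Fts lab M0 \<sigma> M \<and>
             \<not> (\<exists>M'. lstep Fst Fts lab M None M') \<and>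
             (\<forall>A\<in>X. \<not> step_enabled Fst Fts lab M A))}"

end

theory Submission
  imports Defs
begin

text \<open>In a plain net there are no \<open>\<tau>\<close>-steps and every action labels a unique
  transition, so each trace \<open>\<sigma>\<close> leads to one marking \<open>M\<close>, and \<open>\<langle>\<sigma>, X\<rangle>\<close> is a
  step failure pair iff \<open>M\<close> enables no step of \<open>X\<close>.  Moreover, a step of actions is
  enabled iff the multiset of the transitions carrying them is.  Let \<open>t, u, v\<close>, labelled
  \<open>a, b, c\<close>, form a pure M whose presets are covered by a reachable marking \<open>M\<close>: the disjoint
  presets of \<open>t\<close> and \<open>v\<close> fit into \<open>M\<close> side by side, so \<open>{a, c}\<close> and \<open>{b}\<close> are
  enabled, whereas \<open>t, u\<close> and \<open>u, v\<close> share preplaces and hence, in a structural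
  conflict net, can never fire concurrently, so \<open>{a, b}\<close> and \<open>{b, c}\<close> are refused.\<close>

lemma plain_no_tau_step: "plain lab \<Longrightarrow> \<not> lstep Fst Fts lab M None M'"
  by (auto simp: plain_def lstep_def)

lemma plain_tau_closure_eq:
  "plain lab \<Longrightarrow> (\<lambda>X Y. lstep Fst Fts lab X None Y)\<^sup>*\<^sup>* M M' \<Longrightarrow> M' = M"
  by (erule converse_rtranclpE) (auto dest: plain_no_tau_step)

lemma weak_trace_snoc:
  "weak_trace Fst Fts lab M \<sigma> M1 \<Longrightarrow> lstep Fst Fts lab M1 (Some a) M2
   \<Longrightarrow> weak_trace Fst Fts lab M (\<sigma> @ [a]) M2"
  by (induction \<sigma> arbitrary: M) auto

lemma plain_reachable_weak_trace:
  assumes "plain lab" "reachable Fst Fts M0 M"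
  shows "\<exists>\<sigma>. weak_trace Fst Fts lab M0 \<sigma> M"
  using assms(2)
proof induction
  case init
  have "weak_trace Fst Fts lab M0 [] M0" by simp
  then show ?case ..
next
  case (step M t M')
  then obtain \<sigma> where "weak_trace Fst Fts lab M0 \<sigma> M" by blast
  moreover obtain a where "lab t = Some a"
    using assms(1) unfolding plain_def by blast
  with step have "lstep Fst Fts lab M (Some a) M'" by (auto simp: lstep_def)
  ultimately show ?case by (blast intro: weak_trace_snoc)
qed

lemma plain_lstep_deterministic:
  "plain lab \<Longrightarrow> lstep Fst Fts lab M (Some a) M1 \<Longrightarrow> lstep Fst Fts lab M (Some a) M2
   \<Longrightarrow> M1 = M2"
  unfolding lstep_def plain_def fires_def by (metis injD)

lemma plain_weak_trace_deterministic:
  "plain lab \<Longrightarrow> weak_trace Fst Fts lab M \<sigma> M1 \<Longrightarrow> weak_trace Fst Fts lab M \<sigma> M2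
   \<Longrightarrow> M1 = M2"
proof (induction \<sigma> arbitrary: M)
  case Nil
  then show ?case by (metis weak_trace.simps(1) plain_tau_closure_eq)
next
  case (Cons a \<sigma>)
  from Cons.prems(2) obtain N1 N1' where
    "(\<lambda>X Y. lstep Fst Fts lab X None Y)\<^sup>*\<^sup>* M N1" "lstep Fst Fts lab N1 (Some a) N1'"
    "weak_trace Fst Fts lab N1' \<sigma> M1" by auto
  moreover from Cons.prems(3) obtain N2 N2' where
    "(\<lambda>X Y. lstep Fst Fts lab X None Y)\<^sup>*\<^sup>* M N2" "lstep Fst Fts lab N2 (Some a) N2'"
    "weak_trace Fst Fts lab N2' \<sigma> M2" by auto
  ultimately have "N1' = N2'"
    using Cons.prems(1) by (metis plain_tau_closure_eq plain_lstep_deterministic)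
  with Cons.IH Cons.prems(1) \<open>weak_trace Fst Fts lab N1' \<sigma> M1\<close>
    \<open>weak_trace Fst Fts lab N2' \<sigma> M2\<close> show ?case by blast
qed

lemma plain_step_failures_iff:
  assumes "plain lab" "weak_trace Fst Fts lab M0 \<sigma> M"
  shows "(\<sigma>, X) \<in> step_failures Fst Fts M0 lab \<longleftrightarrow>
    finite X \<and> (\<forall>A\<in>X. A \<noteq> {#}) \<and> (\<forall>A\<in>X. \<not> step_enabled Fst Fts lab M A)"
proof -
  have "weak_trace Fst Fts lab M0 \<sigma> M' \<longleftrightarrow> M' = M" for M'
    using assms plain_weak_trace_deterministic by blast
  then show ?thesis
    by (simp add: step_failures_def plain_no_tau_step[OF assms(1)])
qed

lemma plain_step_enabled_iff:
  assumes "plain lab" "image_mset lab G = image_mset Some A"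
  shows "step_enabled Fst Fts lab M A \<longleftrightarrow> enabled Fst Fts M G"
proof
  assume "step_enabled Fst Fts lab M A"
  then obtain H where "enabled Fst Fts M H" "image_mset lab H = image_mset lab G"
    using assms(2) unfolding step_enabled_def by auto
  moreover have "inj lab" using assms(1) by (simp add: plain_def)
  ultimately show "enabled Fst Fts M G"
    by (metis multiset.map_comp inv_o_cancel multiset.map_id)
next
  assume "enabled Fst Fts M G"
  then show "step_enabled Fst Fts lab M A"
    using assms unfolding step_enabled_def plain_def by blast
qed

lemma enabled_iff_preG_le:
  "enabled Fst Fts M G \<longleftrightarrow> G \<noteq> {#} \<and> preG Fst G \<le> M"
  by (simp add: enabled_def fires_def)

lemma enabled_singleton:
  "preT Fst t \<le> M \<Longrightarrow> enabled Fst Fts M {#t#}"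
  by (simp add: enabled_iff_preG_le preG_def preT_def)

lemma enabled_pair_if_disjoint_presets:
  assumes "preT Fst t \<le> M" "preT Fst v \<le> M"
    and "inf (preT Fst t) (preT Fst v) = (\<lambda>_. 0)"
  shows "enabled Fst Fts M {#t, v#}"
proof -
  have "Fst s t + Fst s v \<le> M s" for s
  proof -
    have "min (Fst s t) (Fst s v) = 0"
      using fun_cong[OF assms(3), of s] by (simp add: preT_def inf_nat_def min_def)
    then show ?thesis using le_funD[OF assms(1), of s] le_funD[OF assms(2), of s]
      by (simp add: preT_def min_def split: if_splits)
  qed
  then show ?thesis by (simp add: enabled_iff_preG_le preG_def le_fun_def)
qed

lemma structural_conflict_not_enabled:
  assumes "structural_conflict_net Fst Fts M0" "reachable Fst Fts M0 M"
    and "inf (preT Fst t) (preT Fst u) \<noteq> (\<lambda>_. 0)"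
  shows "\<not> enabled Fst Fts M {#t, u#}"
proof
  assume "enabled Fst Fts M {#t, u#}"
  with assms(2) have "concurrent Fst Fts M0 t u" by (auto simp: concurrent_def add_mset_commute)
  with assms(1,3) show False by (simp add: structural_conflict_net_def)
qed

theorem lemma5p4:
  fixes Fst :: "'s \<Rightarrow> 't \<Rightarrow> nat" and Fts :: "'t \<Rightarrow> 's \<Rightarrow> nat"
    and M0 :: "'s \<Rightarrow> nat" and lab :: "'t \<Rightarrow> 'a option"
  assumes "plain lab"
    and "structural_conflict_net Fst Fts M0"
    and "fully_reachable_pure_M Fst Fts M0"
  shows "\<exists>\<sigma> a b c. a \<noteq> c
     \<and> (\<sigma>, {{#a, c#}}) \<notin> step_failures Fst Fts M0 lab
     \<and> (\<sigma>, {{#b#}}) \<notin> step_failures Fst Fts M0 lab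
     \<and> (\<sigma>, {{#a, b#}, {#b, c#}}) \<in> step_failures Fst Fts M0 lab"
proof -
  obtain t u v M where tu: "inf (preT Fst t) (preT Fst u) \<noteq> (\<lambda>_. 0)"
    and uv: "inf (preT Fst u) (preT Fst v) \<noteq> (\<lambda>_. 0)"
    and tv: "inf (preT Fst t) (preT Fst v) = (\<lambda>_. 0)"
    and M: "reachable Fst Fts M0 M" "sup (preT Fst t) (sup (preT Fst u) (preT Fst v)) \<le> M"
    using assms(3) unfolding fully_reachable_pure_M_def by blast
  obtain a b c where labels: "lab t = Some a" "lab u = Some b" "lab v = Some c"
    using assms(1) unfolding plain_def by (metis option.exhaust)
  have "t \<noteq> v" using tu tv by (auto simp: inf_fun_def inf_nat_def fun_eq_iff)
  then have "a \<noteq> c" using assms(1) labels unfolding plain_def by (metis injD)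
  obtain \<sigma> where \<sigma>: "weak_trace Fst Fts lab M0 \<sigma> M"
    using plain_reachable_weak_trace[OF assms(1) M(1)] by blast
  have pre: "preT Fst t \<le> M" "preT Fst u \<le> M" "preT Fst v \<le> M"
    using M(2) by simp_all
  have enabled: "enabled Fst Fts M {#t, v#}" "enabled Fst Fts M {#u#}"
    by (rule enabled_pair_if_disjoint_presets[OF pre(1,3) tv] enabled_singleton[OF pre(2)])+
  have disabled: "\<not> enabled Fst Fts M {#t, u#}" "\<not> enabled Fst Fts M {#u, v#}"
    using structural_conflict_not_enabled[OF assms(2) M(1)] tu uv by blast+
  have images: "image_mset lab {#t, v#} = image_mset Some {#a, c#}"
    "image_mset lab {#u#} = image_mset Some {#b#}"
    "image_mset lab {#t, u#} = image_mset Some {#a, b#}"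
    "image_mset lab {#u, v#} = image_mset Some {#b, c#}"
    using labels by simp_all
  have "step_enabled Fst Fts lab M {#a, c#}" "step_enabled Fst Fts lab M {#b#}"
    "\<not> step_enabled Fst Fts lab M {#a, b#}" "\<not> step_enabled Fst Fts lab M {#b, c#}"
    using enabled disabled
    by (simp_all only: plain_step_enabled_iff[OF assms(1) images(1)]
      plain_step_enabled_iff[OF assms(1) images(2)] plain_step_enabled_iff[OF assms(1) images(3)]
      plain_step_enabled_iff[OF assms(1) images(4)] simp_thms)
  then have "(\<sigma>, {{#a, c#}}) \<notin> step_failures Fst Fts M0 lab"
    "(\<sigma>, {{#b#}}) \<notin> step_failures Fst Fts M0 lab"
    "(\<sigma>, {{#a, b#}, {#b, c#}}) \<in> step_failures Fst Fts M0 lab"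
    by (simp_all add: plain_step_failures_iff[OF assms(1) \<sigma>])
  with \<open>a \<noteq> c\<close> show ?thesis by blast
qed

end
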